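(* Let $p\ge1$ and $\ell,\ell'\in(0,+\infty)$. Then the function \[ c\mapsto \mathscr{f}_p(\ell,\ell',c)=\int_{-\ell}^{\ell}\int_{-\ell'}^{\ell'}|x-y-c|^p\,\mathrm{d}y\,\mathrm{d}x,\qquad c\in\mathbb{R}, \] has $c=0$ as its unique minimiser. *)

theory Defs
  imports "HOL-Analysis.Analysis"
begin

definition fp :: "real \<Rightarrow> real \<Rightarrow> real \<Rightarrow> real \<Rightarrow> real" where
  "fp p l l' c = integral {-l..l} (\<lambda>x. integral {-l'..l'} (\<lambda>y. \<bar>x - y - c\<bar> powr p))"

end

theory Submission
  imports Defs
begin

text \<open>Since \<open>t \<mapsto> \<bar>t\<bar> powr p\<close> is convex, averaging the integrands for \<open>c\<close> and \<open>-c\<close>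
  gives \<open>2 fp(0) \<le> fp(c) + fp(-c)\<close>; the inequality is strict because at \<open>x = y = 0\<close> the
  averaged integrand is \<open>\<bar>c\<bar> powr p > 0\<close> while the one for \<open>c = 0\<close> vanishes, and both
  are continuous. The substitution \<open>(x, y) \<mapsto> (-x, -y)\<close> shows
  \<open>fp(-c) = fp(c)\<close>, hence \<open>fp(0) < fp(c)\<close> for every \<open>c \<noteq> 0\<close>.\<close>

lemma integral_pos_continuous_nonneg:
  fixes f :: "'a::euclidean_space \<Rightarrow> real"
  assumes "continuous_on (cbox a b) f" "box a b \<noteq> {}"
    and "\<And>x. x \<in> cbox a b \<Longrightarrow> 0 \<le> f x" "z \<in> cbox a b" "0 < f z"
  shows "0 < integral (cbox a b) f"
proof -
  have "0 \<le> integral (cbox a b) f"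
    using assms by (intro integral_nonneg integrable_continuous) auto
  moreover have "integral (cbox a b) f \<noteq> 0"
    using integral_cbox_eq_0_iff[of a b f] assms by auto
  ultimately show ?thesis by linarith
qed

lemma powr_midpoint_le:
  fixes u v p :: real
  assumes "p \<ge> 1" "u \<ge> 0" "v \<ge> 0"
  shows "((u + v) / 2) powr p \<le> (u powr p + v powr p) / 2"
proof (cases "u = 0 \<or> v = 0")
  case True
  have "(w / 2) powr p \<le> w powr p / 2" if "w \<ge> 0" for w :: real
  proof -
    have "2 powr 1 \<le> (2::real) powr p"
      using assms(1) by (intro powr_mono) auto
    then have "w powr p / 2 powr p \<le> w powr p / 2"
      by (intro divide_left_mono) auto
    then show ?thesis
      using that by (simp add: powr_divide)
  qed
  then show ?thesis using True assms by auto
next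
  case False
  then have "u > 0" "v > 0" using assms by auto
  then show ?thesis
    using convex_onD[OF powr_convex[OF assms(1)], of "1/2" u v]
    by (simp add: field_simps)
qed

lemma abs_powr_le_midpoint:
  fixes a c p :: real
  assumes "p \<ge> 1"
  shows "\<bar>a\<bar> powr p \<le> (\<bar>a - c\<bar> powr p + \<bar>a + c\<bar> powr p) / 2"
proof -
  have "\<bar>a\<bar> \<le> (\<bar>a - c\<bar> + \<bar>a + c\<bar>) / 2"
    using abs_triangle_ineq[of "a - c" "a + c"] by simp
  then have "\<bar>a\<bar> powr p \<le> ((\<bar>a - c\<bar> + \<bar>a + c\<bar>) / 2) powr p"
    using assms by (intro powr_mono2) auto
  also have "\<dots> \<le> (\<bar>a - c\<bar> powr p + \<bar>a + c\<bar> powr p) / 2"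
    using powr_midpoint_le assms by auto
  finally show ?thesis .
qed

lemma integral_reflect_symmetric:
  fixes f :: "real \<Rightarrow> 'a::banach"
  shows "integral {-a..a} (\<lambda>x. f (-x)) = integral {-a..a} f"
  using Henstock_Kurzweil_Integration.integral_reflect_real[of a "-a" f] by simp

lemma fp_uminus: "fp p l l' (-c) = fp p l l' c"
proof -
  have "integral {-l'..l'} (\<lambda>y. \<bar>x - y - -c\<bar> powr p) =
      integral {-l'..l'} (\<lambda>y. \<bar>-x - y - c\<bar> powr p)" for x
  proof -
    have "\<bar>x - y - -c\<bar> = \<bar>-x - -y - c\<bar>" for y
      by arith
    then show ?thesis
      using integral_reflect_symmetric[of l' "\<lambda>y. \<bar>-x - y - c\<bar> powr p"] by simp
  qed
  then have "fp p l l' (-c) =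
      integral {-l..l} (\<lambda>x. integral {-l'..l'} (\<lambda>y. \<bar>-x - y - c\<bar> powr p))"
    unfolding fp_def by simp
  also have "\<dots> = fp p l l' c"
    unfolding fp_def by (rule integral_reflect_symmetric)
  finally show ?thesis .
qed

lemma continuous_on_abs_diff_powr:
  fixes p c :: real
  assumes "p > 0"
  shows "continuous_on S (\<lambda>(x, y). \<bar>x - y - c\<bar> powr p)"
  unfolding case_prod_beta
  using assms by (intro continuous_on_powr' continuous_intros) auto

lemma fp_eq_integral_cbox:
  assumes "p > 0"
  shows "fp p l l' c = integral (cbox (-l, -l') (l, l')) (\<lambda>(x, y). \<bar>x - y - c\<bar> powr p)"
  unfolding fp_def
  using integral_prod_continuous[OF continuous_on_abs_diff_powr[OF assms]] by simp

lemma fp_midpoint_strict: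
  assumes "p \<ge> 1" "l > 0" "l' > 0" "c \<noteq> 0"
  shows "2 * fp p l l' 0 < fp p l l' c + fp p l l' (-c)"
proof -
  define R where "R = cbox (-l, -l') (l, l')"
  define \<phi> where "\<phi> d = (\<lambda>(x, y). \<bar>x - y - d\<bar> powr p)" for d :: real
  have cont: "continuous_on R (\<phi> d)" for d
    unfolding \<phi>_def using assms(1) by (intro continuous_on_abs_diff_powr) simp
  then have int: "\<phi> d integrable_on R" for d
    unfolding R_def by (rule integrable_continuous)
  have "0 < integral R (\<lambda>z. \<phi> c z + \<phi> (-c) z - 2 * \<phi> 0 z)"
    unfolding R_def
  proof (rule integral_pos_continuous_nonneg[where z = "(0, 0)"])
    show "continuous_on (cbox (-l, -l') (l, l')) (\<lambda>z. \<phi> c z + \<phi> (-c) z - 2 * \<phi> 0 z)"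
      using cont unfolding R_def by (intro continuous_intros)
    show "0 \<le> \<phi> c z + \<phi> (-c) z - 2 * \<phi> 0 z" for z
      using abs_powr_le_midpoint[OF assms(1), of "fst z - snd z" c]
      by (simp add: \<phi>_def case_prod_beta)
    show "box (-l, -l') (l, l') \<noteq> {}"
      using assms by (auto simp: box_ne_empty Basis_prod_def)
  qed (use assms in \<open>auto simp: \<phi>_def\<close>)
  also have "\<dots> = integral R (\<phi> c) + integral R (\<phi> (-c)) - 2 * integral R (\<phi> 0)"
    using int by (simp add: integral_diff integral_add integrable_add)
  also have "\<dots> = fp p l l' c + fp p l l' (-c) - 2 * fp p l l' 0"
    using assms(1) by (simp add: fp_eq_integral_cbox R_def \<phi>_def)
  finally show ?thesis by simp
qed

theorem mainTheorem12:
  fixes p l l' :: real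
  assumes "p \<ge> 1" and "l > 0" and "l' > 0"
  shows "is_arg_min (fp p l l') (\<lambda>_. True) 0 \<and> (\<forall>c. is_arg_min (fp p l l') (\<lambda>_. True) c \<longrightarrow> c = 0)"
proof -
  have "fp p l l' 0 < fp p l l' c" if "c \<noteq> 0" for c
    using fp_midpoint_strict[OF assms that] fp_uminus[of p l l' c] by simp
  then show ?thesis
    unfolding is_arg_min_def by (metis order.asym)
qed

end
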